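(* Let $\mathcal H$ be an HDML model, $\varphi$ a formula, and $Q_n^f$ the filtration classes defined below. For $n\ge1$, $1\le i\le n$ and $[q]\in Q_n^f$, define $s_i^f([q])=[r]$ iff $s_i(p)\in[r]$ for all $p\in[q]$, and $t_i^f([q])=[r]$ iff $t_i(p)\in[r]$ for all $p\in[q]$. Then (1) $s_i^f$ and $t_i^f$ are well-defined total maps $Q_n^f\to Q_{n-1}^f$; and (2) they satisfy the cubical laws $\alpha^f_i\circ\beta^f_j=\beta^f_{j-1}\circ\alpha^f_i$ for $1\le i<j\le n$, $\alpha,\beta\in\{s,t\}$. Consequently $(\bigcup_n Q_n^f,\bar s^f,\bar t^f)$ is a cubical set.
   Context: A cubical set consists of pairwise disjoint sets $Q_n$ ($n\in\mathbb N$), $Q=\bigcup_n Q_n$, and for every $n\ge1$ and $1\le i\le n$ maps $s_i,t_i:Q_n\to Q_{n-1}$ satisfying the cubical laws $\alpha_i\circ\beta_j=\beta_{j-1}\circ\alpha_i$ for all $1\le i<j\le n$ and $\alpha,\beta\in\{s,t\}$. Elements of $Q_n$ are cells of dimension $n$. An HDML model is $\mathcal H=(Q,\bar s,\bar t,l,V)$ where $(Q,\bar s,\bar t)$ is a cubical set, $l:Q_1\to\Sigma$ is a labeling with $l(s_i(q))=l(t_i(q))$ for $q\in Q_2$, $i\in\{1,2\}$, and $V:Q\to 2^{AP}$ a valuation. HDML formulas: $\varphi::=p\mid\bot\mid\varphi\to\varphi\mid\langle\mathsf s\rangle\varphi\mid\langle\mathsf t\rangle\varphi$ ($p\in AP$).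 Satisfaction at $q\in Q_n$: $\mathcal H,q\models p$ iff $p\in V(q)$; $\bot$ never holds; $\to$ classical; $\mathcal H,q\models\langle\mathsf s\rangle\psi$ iff there are $q'\in Q_{n+1}$ and $1\le i\le n+1$ with $s_i(q')=q$ and $\mathcal H,q'\models\psi$; $\mathcal H,q\models\langle\mathsf t\rangle\psi$ iff there is $1\le i\le n$ with $\mathcal H,t_i(q)\models\psi$. $\mathcal C(\varphi)$ is the set of subformulas of $\varphi$. For $q,q'$ of the same dimension, $q\equiv q'$ iff for every $\psi\in\mathcal C(\varphi)$, $\mathcal H,q\models\psi\iff\mathcal H,q'\models\psi$. For $q\in Q_0$, $[q]=\{q'\in Q_0:q\equiv q'\}$; for $q\in Q_n$, $n\ge1$, $[q]=\{q'\in Q_n: q\equiv q'$, $t_i(q')\in[t_i(q)]$ and $s_i(q')\in[s_i(q)]$ for all $1\le i\le n\}$; $Q_n^f=\{[q]:q\in Q_n\}$. *)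

theory Defs
  imports Main
begin

definition cubical_set :: "(nat \<Rightarrow> 'a set) \<Rightarrow> (nat \<Rightarrow> 'a \<Rightarrow> 'a) \<Rightarrow> (nat \<Rightarrow> 'a \<Rightarrow> 'a) \<Rightarrow> bool" where
  "cubical_set Q s t \<longleftrightarrow>
     (\<forall>m n. m \<noteq> n \<longrightarrow> Q m \<inter> Q n = {}) \<and>
     (\<forall>n \<ge> 1. \<forall>i \<in> {1..n}. \<forall>q \<in> Q n. s i q \<in> Q (n - 1) \<and> t i q \<in> Q (n - 1)) \<and>
     (\<forall>n. \<forall>q \<in> Q n. \<forall>i j. 1 \<le> i \<and> i < j \<and> j \<le> n \<longrightarrow>
        (\<forall>\<alpha> \<in> {s, t}. \<forall>\<beta> \<in> {s, t}. \<alpha> i (\<beta> j q) = \<beta> (j - 1) (\<alpha> i q)))"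

definition hdml_model :: "(nat \<Rightarrow> 'a set) \<Rightarrow> (nat \<Rightarrow> 'a \<Rightarrow> 'a) \<Rightarrow> (nat \<Rightarrow> 'a \<Rightarrow> 'a)
    \<Rightarrow> ('a \<Rightarrow> 'sigma) \<Rightarrow> ('a \<Rightarrow> 'ap set) \<Rightarrow> bool" where
  "hdml_model Q s t l V \<longleftrightarrow> cubical_set Q s t \<and>
     (\<forall>q \<in> Q 2. \<forall>i \<in> {1, 2}. l (s i q) = l (t i q))"

datatype 'ap hform = Atom 'ap | Bot | Imp "'ap hform" "'ap hform"
  | DiaS "'ap hform" | DiaT "'ap hform"

primrec sat :: "(nat \<Rightarrow> 'a set) \<Rightarrow> (nat \<Rightarrow> 'a \<Rightarrow> 'a) \<Rightarrow> (nat \<Rightarrow> 'a \<Rightarrow> 'a) \<Rightarrow> ('a \<Rightarrow> 'ap set)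
    \<Rightarrow> nat \<Rightarrow> 'a \<Rightarrow> 'ap hform \<Rightarrow> bool" where
  "sat Q s t V n q (Atom p) = (p \<in> V q)"
| "sat Q s t V n q Bot = False"
| "sat Q s t V n q (Imp a b) = (sat Q s t V n q a \<longrightarrow> sat Q s t V n q b)"
| "sat Q s t V n q (DiaS a) = (\<exists>q' \<in> Q (Suc n). \<exists>i \<in> {1..Suc n}. s i q' = q \<and> sat Q s t V (Suc n) q' a)"
| "sat Q s t V n q (DiaT a) = (\<exists>i \<in> {1..n}. sat Q s t V (n - 1) (t i q) a)"

primrec subf :: "'ap hform \<Rightarrow> 'ap hform set" where
  "subf (Atom p) = {Atom p}"
| "subf Bot = {Bot}"
| "subf (Imp a b) = insert (Imp a b) (subf a \<union> subf b)"
| "subf (DiaS a) = insert (DiaS a) (subf a)"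
| "subf (DiaT a) = insert (DiaT a) (subf a)"

definition hequiv :: "(nat \<Rightarrow> 'a set) \<Rightarrow> (nat \<Rightarrow> 'a \<Rightarrow> 'a) \<Rightarrow> (nat \<Rightarrow> 'a \<Rightarrow> 'a) \<Rightarrow> ('a \<Rightarrow> 'ap set)
    \<Rightarrow> 'ap hform \<Rightarrow> nat \<Rightarrow> 'a \<Rightarrow> 'a \<Rightarrow> bool" where
  "hequiv Q s t V \<phi> n q q' \<longleftrightarrow> (\<forall>\<psi> \<in> subf \<phi>. sat Q s t V n q \<psi> \<longleftrightarrow> sat Q s t V n q' \<psi>)"

primrec fcls :: "(nat \<Rightarrow> 'a set) \<Rightarrow> (nat \<Rightarrow> 'a \<Rightarrow> 'a) \<Rightarrow> (nat \<Rightarrow> 'a \<Rightarrow> 'a) \<Rightarrow> ('a \<Rightarrow> 'ap set)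
    \<Rightarrow> 'ap hform \<Rightarrow> nat \<Rightarrow> 'a \<Rightarrow> 'a set" where
  "fcls Q s t V \<phi> 0 q = {q' \<in> Q 0. hequiv Q s t V \<phi> 0 q q'}"
| "fcls Q s t V \<phi> (Suc n) q = {q' \<in> Q (Suc n). hequiv Q s t V \<phi> (Suc n) q q' \<and>
      (\<forall>i \<in> {1..Suc n}. t i q' \<in> fcls Q s t V \<phi> n (t i q) \<and> s i q' \<in> fcls Q s t V \<phi> n (s i q))}"

definition Qf :: "(nat \<Rightarrow> 'a set) \<Rightarrow> (nat \<Rightarrow> 'a \<Rightarrow> 'a) \<Rightarrow> (nat \<Rightarrow> 'a \<Rightarrow> 'a) \<Rightarrow> ('a \<Rightarrow> 'ap set)
    \<Rightarrow> 'ap hform \<Rightarrow> nat \<Rightarrow> 'a set set" where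
  "Qf Q s t V \<phi> n = fcls Q s t V \<phi> n ` Q n"

definition face_f :: "(nat \<Rightarrow> 'a set) \<Rightarrow> (nat \<Rightarrow> 'a \<Rightarrow> 'a) \<Rightarrow> (nat \<Rightarrow> 'a \<Rightarrow> 'a) \<Rightarrow> ('a \<Rightarrow> 'ap set)
    \<Rightarrow> 'ap hform \<Rightarrow> (nat \<Rightarrow> 'a \<Rightarrow> 'a) \<Rightarrow> nat \<Rightarrow> 'a set \<Rightarrow> 'a set" where
  "face_f Q s t V \<phi> f i X = (THE Y. Y \<in> (\<Union>m. Qf Q s t V \<phi> m) \<and> (\<forall>p \<in> X. f i p \<in> Y))"

abbreviation sf where "sf Q s t V \<phi> \<equiv> face_f Q s t V \<phi> s"
abbreviation tf where "tf Q s t V \<phi> \<equiv> face_f Q s t V \<phi> t"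

end

theory Submission
  imports Defs
begin

(* We first show that the filtration classes of each dimension partition the
   cells of that dimension (reflexivity and "a member's class is the class"),
   that a face map sends a class into the class of the face, and that a class
   determines the dimension and class of each of its members.  Together these
   give the explicit value face_f f i [q] = [f i q] of the induced face maps,
   from which well-definedness, the cubical laws and the cubical-set property
   of the filtration follow directly from the corresponding facts for Q. *)

lemma fcls_subset: "fcls Q s t V \<phi> n q \<subseteq> Q n"
  by (cases n) auto

lemma face_in_fcls:
  "i \<in> {1..n} \<Longrightarrow> p \<in> fcls Q s t V \<phi> n q \<Longrightarrow> f \<in> {s, t}
   \<Longrightarrow> f i p \<in> fcls Q s t V \<phi> (n - 1) (f i q)"
  by (cases n) auto

context
  fixes Q :: "nat \<Rightarrow> 'a set" and s t :: "nat \<Rightarrow> 'a \<Rightarrow> 'a"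
    and V :: "'a \<Rightarrow> 'ap set" and \<phi> :: "'ap hform"
  assumes cubical: "cubical_set Q s t"
begin

private abbreviation (input) cls :: "nat \<Rightarrow> 'a \<Rightarrow> 'a set" where "cls \<equiv> fcls Q s t V \<phi>"
private abbreviation (input) classes :: "nat \<Rightarrow> 'a set set" where "classes \<equiv> Qf Q s t V \<phi>"
private abbreviation (input) face :: "(nat \<Rightarrow> 'a \<Rightarrow> 'a) \<Rightarrow> nat \<Rightarrow> 'a set \<Rightarrow> 'a set" where
  "face \<equiv> face_f Q s t V \<phi>"

lemma cells_disjoint: "x \<in> Q m \<Longrightarrow> x \<in> Q n \<Longrightarrow> m = n"
  using cubical unfolding cubical_set_def by blast

lemma face_cell:
  "q \<in> Q n \<Longrightarrow> i \<in> {1..n} \<Longrightarrow> f \<in> {s, t} \<Longrightarrow> f i q \<in> Q (n - 1)"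
  using cubical unfolding cubical_set_def by auto

lemma cubical_law:
  "q \<in> Q n \<Longrightarrow> 1 \<le> i \<Longrightarrow> i < j \<Longrightarrow> j \<le> n \<Longrightarrow> \<alpha> \<in> {s, t} \<Longrightarrow> \<beta> \<in> {s, t}
   \<Longrightarrow> \<alpha> i (\<beta> j q) = \<beta> (j - 1) (\<alpha> i q)"
  using cubical unfolding cubical_set_def by blast

lemma fcls_refl: "q \<in> Q n \<Longrightarrow> q \<in> cls n q"
proof (induction n arbitrary: q)
  case 0
  then show ?case by (simp add: hequiv_def)
next
  case (Suc k)
  have "t i q \<in> Q k \<and> s i q \<in> Q k" if "i \<in> {1..Suc k}" for i
    using face_cell[OF Suc.prems that] by auto
  with Suc show ?case by (auto simp: hequiv_def)
qed

text \<open>The class of any member of [q] is [q] itself; together with reflexivity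
  this says the classes of dimension n partition Q n.\<close>
lemma fcls_member_eq: "q \<in> Q n \<Longrightarrow> q' \<in> cls n q \<Longrightarrow> cls n q' = cls n q"
proof (induction n arbitrary: q q')
  case 0
  then show ?case by (auto simp: hequiv_def)
next
  case (Suc k)
  have same_face_classes:
    "cls k (t i q') = cls k (t i q) \<and> cls k (s i q') = cls k (s i q)"
    if i: "i \<in> {1..Suc k}" for i
  proof -
    have "t i q \<in> Q k" "s i q \<in> Q k" using face_cell[OF Suc.prems(1) i] by auto
    moreover have "t i q' \<in> cls k (t i q)" "s i q' \<in> cls k (s i q)"
      using Suc.prems(2) i by auto
    ultimately show ?thesis using Suc.IH by blast
  qed
  show ?case
  proof (rule set_eqI)
    fix x
    have "hequiv Q s t V \<phi> (Suc k) q' x \<longleftrightarrow> hequiv Q s t V \<phi> (Suc k) q x"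
      using Suc.prems(2) by (auto simp: hequiv_def)
    with same_face_classes show "x \<in> cls (Suc k) q' \<longleftrightarrow> x \<in> cls (Suc k) q"
      by simp
  qed
qed

lemma class_of_member:
  assumes Y: "Y \<in> classes m" and x: "x \<in> Y" "x \<in> Q k"
  shows "m = k \<and> Y = cls k x"
proof -
  obtain y where y: "y \<in> Q m" "Y = cls m y" using Y unfolding Qf_def by blast
  have "x \<in> Q m" using x(1) y(2) fcls_subset[of Q s t V \<phi> m y] by auto
  then have dim: "m = k" using cells_disjoint x(2) by simp
  have "cls m x = cls m y" using fcls_member_eq[OF y(1)] x(1) y(2) by simp
  with dim y(2) show ?thesis by simp
qed

text \<open>Classes of different dimensions are different, since every class is nonempty.\<close>
lemma classes_disjoint:
  assumes "m \<noteq> n" shows "classes m \<inter> classes n = {}"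
proof (rule equals0I)
  fix Y assume "Y \<in> classes m \<inter> classes n"
  then have Ym: "Y \<in> classes m" and Yn: "Y \<in> classes n" by auto
  obtain y where y: "y \<in> Q n" "Y = cls n y" using Yn unfolding Qf_def by blast
  have "y \<in> Y" using fcls_refl[OF y(1)] y(2) by simp
  then show False using class_of_member[OF Ym _ y(1)] assms by simp
qed

lemma face_f_fcls:
  assumes q: "q \<in> Q n" and i: "i \<in> {1..n}" and f: "f \<in> {s, t}"
  shows "face f i (cls n q) = cls (n - 1) (f i q)"
    and "\<exists>!Y. Y \<in> classes (n - 1) \<and> (\<forall>p \<in> cls n q. f i p \<in> Y)"
proof -
  have fq: "f i q \<in> Q (n - 1)" using face_cell[OF q i f] .
  have target: "cls (n - 1) (f i q) \<in> classes (n - 1)"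
    using fq by (simp add: Qf_def)
  have covers: "\<forall>p \<in> cls n q. f i p \<in> cls (n - 1) (f i q)"
    using face_in_fcls[of i n _ Q s t V \<phi> q f, OF i _ f] by simp
  have unique: "Y = cls (n - 1) (f i q)"
    if Y: "Y \<in> classes m" and faces: "\<forall>p \<in> cls n q. f i p \<in> Y" for Y m
  proof -
    have "f i q \<in> Y" using faces fcls_refl[OF q] by simp
    then show ?thesis using class_of_member[OF Y _ fq] by simp
  qed
  show "face f i (cls n q) = cls (n - 1) (f i q)"
    unfolding face_f_def
  proof (rule the_equality)
    show "cls (n - 1) (f i q) \<in> (\<Union>m. classes m) \<and> (\<forall>p \<in> cls n q. f i p \<in> cls (n - 1) (f i q))"
      using target covers by blast
    show "Y = cls (n - 1) (f i q)"
      if "Y \<in> (\<Union>m. classes m) \<and> (\<forall>p \<in> cls n q. f i p \<in> Y)" for Y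
      using that unique by blast
  qed
  show "\<exists>!Y. Y \<in> classes (n - 1) \<and> (\<forall>p \<in> cls n q. f i p \<in> Y)"
  proof (rule ex1I)
    show "cls (n - 1) (f i q) \<in> classes (n - 1) \<and> (\<forall>p \<in> cls n q. f i p \<in> cls (n - 1) (f i q))"
      using target covers by blast
    show "Y = cls (n - 1) (f i q)"
      if "Y \<in> classes (n - 1) \<and> (\<forall>p \<in> cls n q. f i p \<in> Y)" for Y
      using that unique by blast
  qed
qed

lemma face_f_well_defined:
  assumes i: "i \<in> {1..n}" and X: "X \<in> classes n" and f: "f \<in> {s, t}"
  shows "(\<exists>!Y. Y \<in> classes (n - 1) \<and> (\<forall>p \<in> X. f i p \<in> Y))
       \<and> face f i X \<in> classes (n - 1) \<and> (\<forall>p \<in> X. f i p \<in> face f i X)"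
proof -
  obtain q where q: "q \<in> Q n" "X = cls n q" using X unfolding Qf_def by blast
  have face_value: "face f i X = cls (n - 1) (f i q)"
    using face_f_fcls(1)[OF q(1) i f] q(2) by simp
  have "cls (n - 1) (f i q) \<in> classes (n - 1)"
    using face_cell[OF q(1) i f] by (simp add: Qf_def)
  moreover have "\<forall>p \<in> X. f i p \<in> cls (n - 1) (f i q)"
    using face_in_fcls[of i n _ Q s t V \<phi> q f, OF i _ f] q(2) by blast
  ultimately show ?thesis
    using face_f_fcls(2)[OF q(1) i f] q(2) face_value by simp
qed

text \<open>Part (2): the induced face maps satisfy the cubical laws, since by
  face_f_fcls both sides are the class of the corresponding face of q.\<close>
lemma face_f_cubical_law:
  assumes X: "X \<in> classes n" and ij: "1 \<le> i" "i < j" "j \<le> n"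
    and \<alpha>: "\<alpha> \<in> {s, t}" and \<beta>: "\<beta> \<in> {s, t}"
  shows "face \<alpha> i (face \<beta> j X) = face \<beta> (j - 1) (face \<alpha> i X)"
proof -
  obtain q where q: "q \<in> Q n" "X = cls n q" using X unfolding Qf_def by blast
  have i: "i \<in> {1..n}" "i \<in> {1..n - 1}" and j: "j \<in> {1..n}" "j - 1 \<in> {1..n - 1}"
    using ij by auto
  have "face \<alpha> i (face \<beta> j X) = face \<alpha> i (cls (n - 1) (\<beta> j q))"
    using face_f_fcls(1)[OF q(1) j(1) \<beta>] q(2) by simp
  also have "\<dots> = cls (n - 1 - 1) (\<alpha> i (\<beta> j q))"
    using face_f_fcls(1)[OF face_cell[OF q(1) j(1) \<beta>] i(2) \<alpha>] .
  also have "\<dots> = cls (n - 1 - 1) (\<beta> (j - 1) (\<alpha> i q))"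
    using cubical_law[OF q(1) ij \<alpha> \<beta>] by simp
  also have "\<dots> = face \<beta> (j - 1) (cls (n - 1) (\<alpha> i q))"
    using face_f_fcls(1)[OF face_cell[OF q(1) i(1) \<alpha>] j(2) \<beta>] by simp
  also have "\<dots> = face \<beta> (j - 1) (face \<alpha> i X)"
    using face_f_fcls(1)[OF q(1) i(1) \<alpha>] q(2) by simp
  finally show ?thesis .
qed

lemma filtration_cubical_set: "cubical_set classes (face s) (face t)"
  unfolding cubical_set_def
proof (intro conjI allI impI ballI)
  show "classes m \<inter> classes n = {}" if "m \<noteq> n" for m n
    using classes_disjoint[OF that] .
  show "face s i X \<in> classes (n - 1)" "face t i X \<in> classes (n - 1)"
    if "i \<in> {1..n}" "X \<in> classes n" for n i X
    using face_f_well_defined[OF that] by blast+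
  show "\<alpha> i (\<beta> j X) = \<beta> (j - 1) (\<alpha> i X)"
    if "X \<in> classes n" "1 \<le> i \<and> i < j \<and> j \<le> n"
       "\<alpha> \<in> {face s, face t}" "\<beta> \<in> {face s, face t}" for n X i j \<alpha> \<beta>
    using that(3,4) face_f_cubical_law[OF that(1)] that(2) by auto
qed

end

theorem mainTheorem3:
  fixes Q :: "nat \<Rightarrow> 'a set" and s t :: "nat \<Rightarrow> 'a \<Rightarrow> 'a"
    and l :: "'a \<Rightarrow> 'sigma" and V :: "'a \<Rightarrow> 'ap set" and \<phi> :: "'ap hform"
  assumes "hdml_model Q s t l V"
  shows "(\<forall>n \<ge> 1. \<forall>i \<in> {1..n}. \<forall>X \<in> Qf Q s t V \<phi> n. \<forall>f \<in> {s, t}.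
            (\<exists>!Y. Y \<in> Qf Q s t V \<phi> (n - 1) \<and> (\<forall>p \<in> X. f i p \<in> Y)) \<and>
            face_f Q s t V \<phi> f i X \<in> Qf Q s t V \<phi> (n - 1) \<and>
            (\<forall>p \<in> X. f i p \<in> face_f Q s t V \<phi> f i X))
       \<and> (\<forall>n. \<forall>X \<in> Qf Q s t V \<phi> n. \<forall>i j. 1 \<le> i \<and> i < j \<and> j \<le> n \<longrightarrow>
            (\<forall>\<alpha> \<in> {s, t}. \<forall>\<beta> \<in> {s, t}.
              face_f Q s t V \<phi> \<alpha> i (face_f Q s t V \<phi> \<beta> j X)
              = face_f Q s t V \<phi> \<beta> (j - 1) (face_f Q s t V \<phi> \<alpha> i X)))
       \<and> cubical_set (Qf Q s t V \<phi>) (sf Q s t V \<phi>) (tf Q s t V \<phi>)"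
proof -
  have cubical: "cubical_set Q s t"
    using assms by (simp add: hdml_model_def)
  show ?thesis
  proof (intro conjI)
    show "\<forall>n \<ge> 1. \<forall>i \<in> {1..n}. \<forall>X \<in> Qf Q s t V \<phi> n. \<forall>f \<in> {s, t}.
            (\<exists>!Y. Y \<in> Qf Q s t V \<phi> (n - 1) \<and> (\<forall>p \<in> X. f i p \<in> Y)) \<and>
            face_f Q s t V \<phi> f i X \<in> Qf Q s t V \<phi> (n - 1) \<and>
            (\<forall>p \<in> X. f i p \<in> face_f Q s t V \<phi> f i X)"
      by (intro allI impI ballI) (rule face_f_well_defined[OF cubical]; assumption)
    show "\<forall>n. \<forall>X \<in> Qf Q s t V \<phi> n. \<forall>i j. 1 \<le> i \<and> i < j \<and> j \<le> n \<longrightarrow>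
            (\<forall>\<alpha> \<in> {s, t}. \<forall>\<beta> \<in> {s, t}.
              face_f Q s t V \<phi> \<alpha> i (face_f Q s t V \<phi> \<beta> j X)
              = face_f Q s t V \<phi> \<beta> (j - 1) (face_f Q s t V \<phi> \<alpha> i X))"
      by (intro allI impI ballI, elim conjE) (rule face_f_cubical_law[OF cubical]; assumption)
  qed (rule filtration_cubical_set[OF cubical])
qed

end
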